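(* Let $s\ge1$, $0<r_1<r_2<\cdots<r_s<1$ and $\varepsilon>0$. Then there is $n_0$ such that for every $n\ge n_0$ for which all $r_in$ are integers, there exist self-orthogonal additive codes $C_s\subseteq C_{s-1}\subseteq\cdots\subseteq C_1\subseteq\mathbb{F}_4^n$ with $|C_i|=2^{n-r_in}$ such that, for each $i$, every vector of $C_i^\perp\setminus C_i$ has weight at least $\left(H_4^{-1}\!\left(\frac{1-r_i}{2}\right)-\varepsilon\right)n$. That is, there are nested stabilizer quantum codes $Q_1\subseteq Q_2\subseteq\cdots\subseteq Q_s$ with parameters $[[n,r_in,\delta_in]]$ that simultaneously (asymptotically) meet the quantum Gilbert–Varshamov bound $\delta_i\ge H_4^{-1}\!\left(\frac{1-r_i}{2}\right)$.
   Context: $\mathbb{F}_4=\{0,1,\omega,\omega^2\}$, $\omega^2=\omega+1$, $\bar x=x^2$; trace inner product $\langle u,v\rangle=\sum_i(u_i\bar v_i+\bar u_iv_i)\in\mathbb{F}_2$ on $\mathbb{F}_4^n$; additive codes are $\mathbb{F}_2$-subspaces; $C^\perp$ is the trace dual; self-orthogonal means $C\subseteq C^\perp$; weight = number of nonzero coordinates. An $[[n,k,d]]$ stabilizer code is given by a self-orthogonal additive $C$ with $|C|=2^{n-k}$ such that every vector of $C^\perp\setminus C$ has weight $\ge d$. $H_4(x)=-x\log_4\frac x3-(1-x)\log_4(1-x)$, and $H_4^{-1}$ is the inverse of its restriction to $(0,3/4]$. *)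

theory Defs
  imports "HOL-Analysis.Analysis"
begin

text \<open>The field F_4 = {0,1,w,w^2} with w^2 = w + 1.\<close>
datatype f4 = F0 | F1 | Fw | Fw2

fun f4_add :: "f4 \<Rightarrow> f4 \<Rightarrow> f4" where
  "f4_add F0 y = y"
| "f4_add x F0 = x"
| "f4_add F1 F1 = F0" | "f4_add F1 Fw = Fw2" | "f4_add F1 Fw2 = Fw"
| "f4_add Fw F1 = Fw2" | "f4_add Fw Fw = F0" | "f4_add Fw Fw2 = F1"
| "f4_add Fw2 F1 = Fw" | "f4_add Fw2 Fw = F1" | "f4_add Fw2 Fw2 = F0"

fun f4_mul :: "f4 \<Rightarrow> f4 \<Rightarrow> f4" where
  "f4_mul F0 y = F0"
| "f4_mul x F0 = F0"
| "f4_mul F1 y = y"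
| "f4_mul x F1 = x"
| "f4_mul Fw Fw = Fw2" | "f4_mul Fw Fw2 = F1"
| "f4_mul Fw2 Fw = F1" | "f4_mul Fw2 Fw2 = Fw"

text \<open>Conjugation x \<mapsto> x^2.\<close>
fun f4_conj :: "f4 \<Rightarrow> f4" where
  "f4_conj F0 = F0" | "f4_conj F1 = F1" | "f4_conj Fw = Fw2" | "f4_conj Fw2 = Fw"

text \<open>Vectors of F_4^n: functions nat \<Rightarrow> f4 vanishing (= F0) outside {..<n}.\<close>
definition vecs :: "nat \<Rightarrow> (nat \<Rightarrow> f4) set" where
  "vecs n = {v. \<forall>i\<ge>n. v i = F0}"

definition vadd :: "(nat \<Rightarrow> f4) \<Rightarrow> (nat \<Rightarrow> f4) \<Rightarrow> nat \<Rightarrow> f4" where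
  "vadd u v = (\<lambda>i. f4_add (u i) (v i))"

definition zero_vec :: "nat \<Rightarrow> f4" where
  "zero_vec = (\<lambda>i. F0)"

text \<open>Trace inner product: sum_i (u_i conj(v_i) + conj(u_i) v_i), a value in {0,1} = F_2.\<close>
definition trace_ip :: "nat \<Rightarrow> (nat \<Rightarrow> f4) \<Rightarrow> (nat \<Rightarrow> f4) \<Rightarrow> f4" where
  "trace_ip n u v = foldr f4_add
     (map (\<lambda>i. f4_add (f4_mul (u i) (f4_conj (v i))) (f4_mul (f4_conj (u i)) (v i))) [0..<n]) F0"

definition weight :: "nat \<Rightarrow> (nat \<Rightarrow> f4) \<Rightarrow> nat" where
  "weight n v = card {i. i < n \<and> v i \<noteq> F0}"

text \<open>Additive code = F_2-subspace of F_4^n (contains 0, closed under addition).\<close>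
definition additive_code :: "nat \<Rightarrow> (nat \<Rightarrow> f4) set \<Rightarrow> bool" where
  "additive_code n C \<longleftrightarrow> C \<subseteq> vecs n \<and> zero_vec \<in> C \<and> (\<forall>u\<in>C. \<forall>v\<in>C. vadd u v \<in> C)"

definition trace_dual :: "nat \<Rightarrow> (nat \<Rightarrow> f4) set \<Rightarrow> (nat \<Rightarrow> f4) set" where
  "trace_dual n C = {v \<in> vecs n. \<forall>c\<in>C. trace_ip n c v = F0}"

definition self_orthogonal :: "nat \<Rightarrow> (nat \<Rightarrow> f4) set \<Rightarrow> bool" where
  "self_orthogonal n C \<longleftrightarrow> C \<subseteq> trace_dual n C"

definition H4 :: "real \<Rightarrow> real" where
  "H4 x = - x * log 4 (x / 3) - (1 - x) * log 4 (1 - x)"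

definition H4_inv :: "real \<Rightarrow> real" where
  "H4_inv y = (THE x. 0 < x \<and> x \<le> 3/4 \<and> H4 x = y)"

end

theory Submission
  imports Defs "HOL-Real_Asymp.Real_Asymp"
begin

(* A derandomised Gilbert-Varshamov argument. Starting from {0}, a self-orthogonal code D
   is grown one generator x at a time, x taken from D^perp - D; this gives a single chain
   D_0 < D_1 < ... < D_n with |D_k| = 2^k, and C_i := D_(m_i) with m_i = n - r_i n.
   Charge every vector of weight below t_i with 2^(-m_i) and let the mass of D be the
   total charge on D^perp - D. Adjoining x keeps in D^perp - D only vectors orthogonal
   to x, and each vector of D^perp - D is orthogonal to at most half of the candidates,
   so some x at least halves the mass. If the initial mass sum_i |B(t_i)| 2^(-m_i) is
   below 1, the mass of D_(m_i) is below 2^(-m_i), so C_i^perp - C_i contains no vector of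
   weight below t_i. The volume bound |B(l n)| <= 4^(n H4(l)) makes the initial mass tend
   to 0 when t_i = (H4^-1((1 - r_i)/2) - eps) n. *)

section \<open>The trace inner product\<close>

lemma UNIV_f4: "(UNIV :: f4 set) = {F0, F1, Fw, Fw2}"
  using f4.exhaust by auto

lemma f4_add_commute: "f4_add a b = f4_add b a"
  by (cases a; cases b; simp)

lemma f4_add_assoc: "f4_add (f4_add a b) c = f4_add a (f4_add b c)"
  by (cases a; cases b; cases c; simp)

lemma f4_add_F0_right [simp]: "f4_add a F0 = a"
  by (cases a; simp)

lemma f4_add_self [simp]: "f4_add a a = F0"
  by (cases a; simp)

lemma f4_add_eq_F0_iff: "f4_add a b = F0 \<longleftrightarrow> a = b"
  by (cases a; cases b; simp)

lemma f4_add_add_swap: "f4_add (f4_add a b) (f4_add c d) = f4_add (f4_add a c) (f4_add b d)"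
  by (cases a; cases b; cases c; cases d; simp)

definition f4_trace_form :: "f4 \<Rightarrow> f4 \<Rightarrow> f4" where
  "f4_trace_form a b = f4_add (f4_mul a (f4_conj b)) (f4_mul (f4_conj a) b)"

lemma f4_trace_form_add_left:
  "f4_trace_form (f4_add a a') b = f4_add (f4_trace_form a b) (f4_trace_form a' b)"
  unfolding f4_trace_form_def by (cases a; cases a'; cases b; simp)

lemma f4_trace_form_commute: "f4_trace_form a b = f4_trace_form b a"
  unfolding f4_trace_form_def by (cases a; cases b; simp)

lemma f4_trace_form_self [simp]: "f4_trace_form a a = F0"
  unfolding f4_trace_form_def by (cases a; simp)

lemma f4_trace_form_F0 [simp]: "f4_trace_form F0 b = F0" "f4_trace_form b F0 = F0"
  unfolding f4_trace_form_def by (cases b; simp)+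

lemma f4_trace_form_F0_or_F1: "f4_trace_form a b = F0 \<or> f4_trace_form a b = F1"
  unfolding f4_trace_form_def by (cases a; cases b; simp)

lemma f4_trace_form_nondegenerate: "a \<noteq> F0 \<Longrightarrow> \<exists>c. f4_trace_form a c = F1"
  unfolding f4_trace_form_def by (cases a) (auto intro: exI[of _ F1] exI[of _ Fw])

lemma vadd_assoc: "vadd (vadd a b) c = vadd a (vadd b c)"
  by (auto simp: vadd_def f4_add_assoc)

lemma vadd_commute: "vadd a b = vadd b a"
  by (auto simp: vadd_def f4_add_commute)

lemma vadd_left_commute: "vadd a (vadd b c) = vadd b (vadd a c)"
  by (metis vadd_assoc vadd_commute)

lemma vadd_self [simp]: "vadd a a = zero_vec"
  by (auto simp: vadd_def zero_vec_def)

lemma vadd_zero_vec [simp]: "vadd a zero_vec = a" "vadd zero_vec a = a"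
  by (auto simp: vadd_def zero_vec_def f4_add_commute[of F0])

lemma vadd_vadd_cancel [simp]: "vadd a (vadd a b) = b"
  by (simp add: vadd_assoc[symmetric])

lemma vadd_in_vecs: "u \<in> vecs n \<Longrightarrow> v \<in> vecs n \<Longrightarrow> vadd u v \<in> vecs n"
  by (auto simp: vecs_def vadd_def)

lemma zero_vec_in_vecs [simp]: "zero_vec \<in> vecs n"
  by (auto simp: vecs_def zero_vec_def)

lemma trace_ip_0 [simp]: "trace_ip 0 u v = F0"
  unfolding trace_ip_def by simp

lemma trace_ip_Suc: "trace_ip (Suc n) u v = f4_add (trace_ip n u v) (f4_trace_form (u n) (v n))"
proof -
  have foldr_shift: "foldr f4_add xs a = f4_add (foldr f4_add xs F0) a" for xs a
    by (induction xs) (auto simp: f4_add_assoc)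
  show ?thesis
    unfolding trace_ip_def f4_trace_form_def by (simp, subst foldr_shift, simp)
qed

lemma trace_ip_vadd_left: "trace_ip n (vadd u u') v = f4_add (trace_ip n u v) (trace_ip n u' v)"
  by (induction n) (auto simp: trace_ip_Suc vadd_def f4_trace_form_add_left f4_add_add_swap)

lemma trace_ip_commute: "trace_ip n u v = trace_ip n v u"
  by (induction n) (auto simp: trace_ip_Suc f4_trace_form_commute)

lemma trace_ip_vadd_right: "trace_ip n v (vadd u u') = f4_add (trace_ip n v u) (trace_ip n v u')"
  using trace_ip_vadd_left trace_ip_commute by metis

lemma trace_ip_self [simp]: "trace_ip n u u = F0"
  by (induction n) (auto simp: trace_ip_Suc)

lemma trace_ip_zero_vec [simp]: "trace_ip n zero_vec v = F0" "trace_ip n v zero_vec = F0"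
  by (induction n) (auto simp: trace_ip_Suc zero_vec_def)

lemma trace_ip_F0_or_F1: "trace_ip n u v = F0 \<or> trace_ip n u v = F1"
proof (induction n)
  case (Suc n)
  then show ?case using f4_trace_form_F0_or_F1[of "u n" "v n"] by (auto simp: trace_ip_Suc)
qed simp

lemma trace_ip_single:
  "trace_ip n w (\<lambda>j. if j = i then c else F0) = (if i < n then f4_trace_form (w i) c else F0)"
  by (induction n) (auto simp: trace_ip_Suc less_Suc_eq)

section \<open>Vectors and weights\<close>

lemma vecs_0: "vecs 0 = {zero_vec}"
  by (auto simp: vecs_def zero_vec_def)

lemma vecs_Suc: "vecs (Suc n) = (\<lambda>(v, c). v(n := c)) ` (vecs n \<times> UNIV)"
proof
  show "vecs (Suc n) \<subseteq> (\<lambda>(v, c). v(n := c)) ` (vecs n \<times> UNIV)"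
  proof
    fix w assume "w \<in> vecs (Suc n)"
    then have "(w(n := F0), w n) \<in> vecs n \<times> UNIV" by (auto simp: vecs_def)
    moreover have "w = (\<lambda>(v, c). v(n := c)) (w(n := F0), w n)" by simp
    ultimately show "w \<in> (\<lambda>(v, c). v(n := c)) ` (vecs n \<times> UNIV)" by blast
  qed
qed (auto simp: vecs_def)

lemma inj_on_fun_upd_vecs: "inj_on (\<lambda>(v, c). v(n := c)) (vecs n \<times> UNIV)"
proof (rule inj_onI, clarify)
  fix v c v' c' assume v: "v \<in> vecs n" "v' \<in> vecs n" and eq: "v(n := c) = v'(n := c')"
  have "c = c'" using eq by (metis fun_upd_same)
  moreover have "v i = v' i" for i
    using v fun_upd_other[of i n v c] fun_upd_other[of i n v' c'] eq
    by (cases "i = n") (auto simp: vecs_def)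
  then have "v = v'" ..
  ultimately show "v = v' \<and> c = c'" by simp
qed

lemma finite_vecs [simp]: "finite (vecs n)"
  by (induction n) (simp_all add: vecs_0 vecs_Suc UNIV_f4)

lemma weight_le: "weight n v \<le> n"
  unfolding weight_def by (rule card_mono[of "{..<n}", simplified]) auto

lemma weight_fun_upd: "weight (Suc n) (v(n := c)) = weight n v + (if c = F0 then 0 else 1)"
proof -
  have "{i. i < Suc n \<and> (v(n := c)) i \<noteq> F0}
      = {i. i < n \<and> v i \<noteq> F0} \<union> (if c = F0 then {} else {n})"
    by (auto simp: less_Suc_eq)
  then show ?thesis unfolding weight_def by auto
qed

lemma sum_vecs_weight_power:
  fixes p q :: real
  shows "(\<Sum>v\<in>vecs n. p ^ weight n v * q ^ (n - weight n v)) = (3 * p + q) ^ n"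
proof (induction n)
  case 0
  then show ?case by (simp add: vecs_0 weight_def)
next
  case (Suc n)
  have "(\<Sum>v\<in>vecs (Suc n). p ^ weight (Suc n) v * q ^ (Suc n - weight (Suc n) v))
      = (\<Sum>v\<in>vecs n. \<Sum>c\<in>UNIV. p ^ weight (Suc n) (v(n := c)) * q ^ (Suc n - weight (Suc n) (v(n := c))))"
    unfolding vecs_Suc sum.reindex[OF inj_on_fun_upd_vecs]
    by (simp add: sum.cartesian_product split_def)
  also have "\<dots> = (\<Sum>v\<in>vecs n. (3 * p + q) * (p ^ weight n v * q ^ (n - weight n v)))"
  proof (rule sum.cong[OF refl])
    fix v
    have "Suc n - weight n v = Suc (n - weight n v)" using weight_le[of n v] by simp
    then show "(\<Sum>c\<in>UNIV. p ^ weight (Suc n) (v(n := c)) * q ^ (Suc n - weight (Suc n) (v(n := c))))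
        = (3 * p + q) * (p ^ weight n v * q ^ (n - weight n v))"
      unfolding UNIV_f4 weight_fun_upd by (simp add: algebra_simps)
  qed
  also have "\<dots> = (3 * p + q) ^ Suc n" using Suc by (simp add: sum_distrib_left[symmetric])
  finally show ?case .
qed

lemma card_vecs: "card (vecs n) = 4 ^ n"
  using sum_vecs_weight_power[where n = n and p = 1 and q = 1] by (simp flip: of_nat_eq_iff)

lemma vecs_nonzero_coord: "w \<in> vecs n \<Longrightarrow> w \<noteq> zero_vec \<Longrightarrow> \<exists>i<n. w i \<noteq> F0"
  unfolding vecs_def zero_vec_def fun_eq_iff using leI by blast

section \<open>Trace duals\<close>

lemma trace_dual_subset_vecs: "trace_dual n C \<subseteq> vecs n"
  by (auto simp: trace_dual_def)

lemma finite_trace_dual [simp]: "finite (trace_dual n C)"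
  using finite_subset[OF trace_dual_subset_vecs finite_vecs] .

lemma additive_code_finite: "additive_code n C \<Longrightarrow> finite C"
  unfolding additive_code_def using finite_subset finite_vecs by blast

lemma additive_code_trace_dual: "additive_code n (trace_dual n C)"
  unfolding additive_code_def trace_dual_def by (auto simp: vadd_in_vecs trace_ip_vadd_right)

lemma subset_trace_dual_trace_dual: "C \<subseteq> vecs n \<Longrightarrow> C \<subseteq> trace_dual n (trace_dual n C)"
  unfolding trace_dual_def by (auto simp: trace_ip_commute)

lemma trace_dual_zero_code: "trace_dual n {zero_vec} = vecs n"
  by (auto simp: trace_dual_def)

lemma trace_dual_vecs: "trace_dual n (vecs n) = {zero_vec}"
proof (intro equalityI subsetI)
  fix w assume w: "w \<in> trace_dual n (vecs n)"
  show "w \<in> {zero_vec}"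
  proof (rule ccontr)
    assume "w \<notin> {zero_vec}"
    then obtain i where i: "i < n" "w i \<noteq> F0"
      using vecs_nonzero_coord w trace_dual_subset_vecs by blast
    obtain c where c: "f4_trace_form (w i) c = F1"
      using f4_trace_form_nondegenerate[OF i(2)] by blast
    have "(\<lambda>j. if j = i then c else F0) \<in> vecs n" using i by (auto simp: vecs_def)
    then have "trace_ip n w (\<lambda>j. if j = i then c else F0) = F0"
      using w by (auto simp: trace_dual_def trace_ip_commute)
    then show False using c i by (simp add: trace_ip_single)
  qed
qed (auto simp: trace_dual_def)

lemma card_trace_ip_F0_half:
  assumes E: "additive_code n E" and y: "y \<in> E" "trace_ip n v y = F1"
  shows "2 * card {z\<in>E. trace_ip n v z = F0} = card E"
proof -
  let ?A = "{z\<in>E. trace_ip n v z = F0}" and ?B = "{z\<in>E. trace_ip n v z = F1}"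
  have "bij_betw (\<lambda>z. vadd z y) ?A ?B"
    by (rule bij_betwI[where g = "\<lambda>z. vadd z y"])
       (use E y in \<open>auto simp: additive_code_def trace_ip_vadd_right vadd_assoc\<close>)
  then have "card ?A = card ?B" by (rule bij_betw_same_card)
  moreover have "card E = card ?A + card ?B"
  proof -
    have "finite E" using E by (rule additive_code_finite)
    then have "card (?A \<union> ?B) = card ?A + card ?B" by (intro card_Un_disjoint) auto
    moreover have "?A \<union> ?B = E" using trace_ip_F0_or_F1 by blast
    ultimately show ?thesis by simp
  qed
  ultimately show ?thesis by simp
qed

lemma exists_trace_ip_F1:
  assumes "trace_dual n (trace_dual n D) = D" "x \<in> vecs n" "x \<notin> D"
  shows "\<exists>y\<in>trace_dual n D. trace_ip n y x = F1"
proof -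
  obtain y where "y \<in> trace_dual n D" "trace_ip n y x \<noteq> F0"
    using assms unfolding trace_dual_def[of n "trace_dual n D"] by auto
  then show ?thesis using trace_ip_F0_or_F1 by metis
qed

section \<open>Adjoining a generator to a self-orthogonal code\<close>

text \<open>The last two conjuncts hold for every additive code, by nondegeneracy of the trace form;
  carrying them as an invariant avoids developing linear algebra over \<open>\<bbbF>\<^sub>2\<close>.\<close>

definition isotropic :: "nat \<Rightarrow> (nat \<Rightarrow> f4) set \<Rightarrow> nat \<Rightarrow> bool" where
  "isotropic n D k \<longleftrightarrow> additive_code n D \<and> self_orthogonal n D \<and> card D = 2 ^ k
     \<and> card (trace_dual n D) = 2 ^ (2 * n - k) \<and> trace_dual n (trace_dual n D) = D"

lemma isotropic_zero_code: "isotropic n {zero_vec} 0"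
  by (simp add: isotropic_def additive_code_def self_orthogonal_def trace_dual_zero_code
      trace_dual_vecs card_vecs power_mult)

definition extend_code :: "(nat \<Rightarrow> f4) set \<Rightarrow> (nat \<Rightarrow> f4) \<Rightarrow> (nat \<Rightarrow> f4) set" where
  "extend_code D x = D \<union> vadd x ` D"

lemma subset_extend_code: "D \<subseteq> extend_code D x"
  by (simp add: extend_code_def)

lemma additive_code_extend_code:
  assumes D: "additive_code n D" and x: "x \<in> vecs n"
  shows "additive_code n (extend_code D x)"
proof -
  have closed: "vadd a b \<in> D" if "a \<in> D" "b \<in> D" for a b
    using D that by (auto simp: additive_code_def)
  have "vadd u v \<in> extend_code D x"
    if uv: "u \<in> extend_code D x" "v \<in> extend_code D x" for u v
  proof -
    obtain a b where ab: "a \<in> D" "b \<in> D" and "u = a \<or> u = vadd x a" and "v = b \<or> v = vadd x b"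
      using uv unfolding extend_code_def by blast
    then have "vadd u v = vadd a b \<or> vadd u v = vadd x (vadd a b)"
      by (auto simp: vadd_assoc vadd_left_commute)
    then show ?thesis using closed[OF ab] by (auto simp: extend_code_def)
  qed
  then show ?thesis
    using D x by (auto simp: additive_code_def extend_code_def vadd_in_vecs)
qed

lemma card_extend_code:
  assumes D: "additive_code n D" and x: "x \<notin> D"
  shows "card (extend_code D x) = 2 * card D"
proof -
  have "D \<inter> vadd x ` D = {}"
  proof (rule ccontr)
    assume "D \<inter> vadd x ` D \<noteq> {}"
    then obtain a where "a \<in> D" "vadd x a \<in> D" by auto
    then have "vadd (vadd x a) a \<in> D" using D by (auto simp: additive_code_def)
    then show False using x by (simp add: vadd_assoc)
  qed
  moreover have "inj_on (vadd x) D" by (rule inj_onI) (metis vadd_vadd_cancel)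
  moreover have "finite D" using D by (rule additive_code_finite)
  ultimately show ?thesis by (simp add: extend_code_def card_Un_disjoint card_image)
qed

lemma trace_dual_extend_code:
  assumes D: "additive_code n D"
  shows "trace_dual n (extend_code D x) = {z \<in> trace_dual n D. trace_ip n x z = F0}"
proof
  have "x \<in> extend_code D x"
    using D by (auto simp: extend_code_def additive_code_def intro!: image_eqI[of _ _ zero_vec])
  then show "trace_dual n (extend_code D x) \<subseteq> {z \<in> trace_dual n D. trace_ip n x z = F0}"
    unfolding trace_dual_def extend_code_def by auto
  show "{z \<in> trace_dual n D. trace_ip n x z = F0} \<subseteq> trace_dual n (extend_code D x)"
    unfolding trace_dual_def extend_code_def by (auto simp: trace_ip_vadd_left)
qed

lemma self_orthogonal_extend_code:
  assumes D: "additive_code n D" "self_orthogonal n D" and x: "x \<in> trace_dual n D"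
  shows "self_orthogonal n (extend_code D x)"
  unfolding self_orthogonal_def trace_dual_extend_code[OF D(1)]
proof
  fix b assume "b \<in> extend_code D x"
  then obtain d where d: "d \<in> D" and "b = d \<or> b = vadd x d" by (auto simp: extend_code_def)
  moreover have "d \<in> trace_dual n D" using d D(2) by (auto simp: self_orthogonal_def)
  moreover have "trace_ip n x d = F0" using x d by (auto simp: trace_dual_def trace_ip_commute)
  ultimately show "b \<in> {z \<in> trace_dual n D. trace_ip n x z = F0}"
    using x additive_code_trace_dual[of n D]
    by (auto simp: additive_code_def trace_ip_vadd_right)
qed

text \<open>Pick \<open>y \<in> D\<^sup>\<perp>\<close> with \<open>\<langle>x, y\<rangle> = 1\<close>. Every \<open>z \<in> D\<^sup>\<perp>\<close> lies in the dual of the extension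
  or differs from \<open>y\<close> by an element of it, so a vector \<open>w\<close> of the double dual becomes orthogonal
  to all of \<open>D\<^sup>\<perp>\<close> after adding \<open>0\<close> or \<open>x\<close>, according to the value of \<open>\<langle>y, w\<rangle>\<close>.\<close>

lemma trace_dual_trace_dual_extend_code:
  assumes D: "additive_code n D" "trace_dual n (trace_dual n D) = D"
    and x: "x \<in> vecs n" "x \<notin> D"
  shows "trace_dual n (trace_dual n (extend_code D x)) = extend_code D x"
proof
  show "extend_code D x \<subseteq> trace_dual n (trace_dual n (extend_code D x))"
    using additive_code_extend_code[OF D(1) x(1)] subset_trace_dual_trace_dual
    by (auto simp: additive_code_def)
next
  show "trace_dual n (trace_dual n (extend_code D x)) \<subseteq> extend_code D x"
  proof
    fix w assume w: "w \<in> trace_dual n (trace_dual n (extend_code D x))"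
    have w_vecs: "w \<in> vecs n" using w trace_dual_subset_vecs by blast
    obtain y where y: "y \<in> trace_dual n D" "trace_ip n x y = F1"
      using exists_trace_ip_F1[OF D(2) x] trace_ip_commute by metis
    have w_hyperplane: "trace_ip n z w = F0" if "z \<in> trace_dual n D" "trace_ip n x z = F0" for z
      using w that unfolding trace_dual_extend_code[OF D(1)] by (auto simp: trace_dual_def)
    have w_coset: "trace_ip n z w = trace_ip n y w" if z: "z \<in> trace_dual n D" "trace_ip n x z = F1" for z
    proof -
      have "vadd z y \<in> trace_dual n D"
        using additive_code_trace_dual z(1) y(1) by (auto simp: additive_code_def)
      moreover have "trace_ip n x (vadd z y) = F0" using z(2) y(2) by (simp add: trace_ip_vadd_right)
      ultimately have "trace_ip n (vadd z y) w = F0" by (rule w_hyperplane)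
      then show ?thesis by (simp add: trace_ip_vadd_left f4_add_eq_F0_iff)
    qed
    have in_D: "u \<in> D"
      if "u \<in> vecs n" and "\<And>z. z \<in> trace_dual n D \<Longrightarrow> trace_ip n z u = F0" for u
      using that D(2) unfolding trace_dual_def[of n "trace_dual n D"] by auto
    consider "trace_ip n y w = F0" | "trace_ip n y w = F1" using trace_ip_F0_or_F1 by blast
    then show "w \<in> extend_code D x"
    proof cases
      case 1
      have "w \<in> D"
        by (rule in_D[OF w_vecs]) (metis 1 w_coset w_hyperplane trace_ip_F0_or_F1)
      then show ?thesis using subset_extend_code by blast
    next
      case 2
      have "vadd w x \<in> D"
      proof (rule in_D)
        show "vadd w x \<in> vecs n" using w_vecs x(1) by (rule vadd_in_vecs)
        fix z assume z: "z \<in> trace_dual n D"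
        show "trace_ip n z (vadd w x) = F0"
          using trace_ip_F0_or_F1[of n x z] w_hyperplane[OF z] w_coset[OF z] 2
          by (auto simp: trace_ip_vadd_right trace_ip_commute[of n z x])
      qed
      moreover have "w = vadd x (vadd w x)" by (simp add: vadd_left_commute)
      ultimately show ?thesis by (auto simp: extend_code_def)
    qed
  qed
qed

lemma card_trace_dual_extend_code:
  assumes D: "additive_code n D" "trace_dual n (trace_dual n D) = D"
    and x: "x \<in> vecs n" "x \<notin> D"
  shows "2 * card (trace_dual n (extend_code D x)) = card (trace_dual n D)"
proof -
  obtain y where "y \<in> trace_dual n D" "trace_ip n x y = F1"
    using exists_trace_ip_F1[OF D(2) x] trace_ip_commute by metis
  then show ?thesis
    unfolding trace_dual_extend_code[OF D(1)]
    by (rule card_trace_ip_F0_half[OF additive_code_trace_dual])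
qed

lemma isotropic_extend_code:
  assumes D: "isotropic n D k" and x: "x \<in> trace_dual n D - D"
  shows "isotropic n (extend_code D x) (Suc k)"
proof -
  have D': "additive_code n D" "self_orthogonal n D" "card D = 2 ^ k"
    "card (trace_dual n D) = 2 ^ (2 * n - k)" "trace_dual n (trace_dual n D) = D"
    using D by (auto simp: isotropic_def)
  have x_vecs: "x \<in> vecs n" using x trace_dual_subset_vecs by blast
  have dual_half: "2 * card (trace_dual n (extend_code D x)) = 2 ^ (2 * n - k)"
    using card_trace_dual_extend_code[OF D'(1,5) x_vecs] x D'(4) by simp
  then obtain m where "2 * n - k = Suc m"
    by (cases "2 * n - k") auto
  then have "card (trace_dual n (extend_code D x)) = 2 ^ (2 * n - Suc k)"
    using dual_half by simp
  then show ?thesis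
    using D' x x_vecs unfolding isotropic_def
    by (simp add: additive_code_extend_code card_extend_code self_orthogonal_extend_code
        trace_dual_trace_dual_extend_code)
qed

section \<open>A greedy chain of self-orthogonal codes\<close>

definition dual_mass :: "nat \<Rightarrow> ((nat \<Rightarrow> f4) \<Rightarrow> real) \<Rightarrow> (nat \<Rightarrow> f4) set \<Rightarrow> real" where
  "dual_mass n f D = (\<Sum>v\<in>trace_dual n D - D. f v)"

lemma exists_le_mean:
  fixes g :: "'a \<Rightarrow> real"
  assumes "finite S" "S \<noteq> {}" "sum g S \<le> real (card S) * c"
  shows "\<exists>x\<in>S. g x \<le> c"
proof (rule ccontr)
  assume "\<not> (\<exists>x\<in>S. g x \<le> c)"
  then have "(\<Sum>x\<in>S. c) < sum g S" using assms(1,2) by (intro sum_strict_mono) auto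
  then show False using assms(3) by simp
qed

lemma card_orthogonal_in_dual_le_half:
  assumes D: "isotropic n D k" and v: "v \<in> trace_dual n D - D"
  shows "2 * card {x \<in> trace_dual n D - D. trace_ip n x v = F0} \<le> card (trace_dual n D - D)"
proof -
  have D': "additive_code n D" "D \<subseteq> trace_dual n D" "trace_dual n (trace_dual n D) = D"
    using D by (auto simp: isotropic_def self_orthogonal_def)
  have "finite D" using D'(1) by (rule additive_code_finite)
  define A where "A = {z \<in> trace_dual n D. trace_ip n v z = F0}"
  obtain y where "y \<in> trace_dual n D" "trace_ip n v y = F1"
    using exists_trace_ip_F1[OF D'(3)] v trace_dual_subset_vecs trace_ip_commute by (metis DiffE subsetD)
  then have "2 * card A = card (trace_dual n D)"
    unfolding A_def by (rule card_trace_ip_F0_half[OF additive_code_trace_dual])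
  moreover have "D \<subseteq> A"
    using v D'(2) by (auto simp: A_def trace_dual_def trace_ip_commute)
  moreover have "{x \<in> trace_dual n D - D. trace_ip n x v = F0} = A - D"
    by (auto simp: A_def trace_ip_commute)
  ultimately show ?thesis
    using \<open>finite D\<close> D'(2) by (simp add: card_Diff_subset)
qed

lemma dual_mass_extend_code_le:
  assumes D: "additive_code n D" and f: "\<And>v. 0 \<le> f v"
  shows "dual_mass n f (extend_code D x)
    \<le> (\<Sum>v\<in>trace_dual n D - D. if trace_ip n x v = F0 then f v else 0)"
proof -
  have "trace_dual n (extend_code D x) - extend_code D x
      \<subseteq> {v \<in> trace_dual n D - D. trace_ip n x v = F0}"
    using subset_extend_code[of D x] unfolding trace_dual_extend_code[OF D] by auto
  then have "dual_mass n f (extend_code D x) \<le> (\<Sum>v\<in>{v \<in> trace_dual n D - D. trace_ip n x v = F0}. f v)"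
    unfolding dual_mass_def by (intro sum_mono2) (auto simp: f)
  also have "\<dots> = (\<Sum>v\<in>trace_dual n D - D. if trace_ip n x v = F0 then f v else 0)"
    by (rule sum.inter_filter) simp
  finally show ?thesis .
qed

text \<open>Method of conditional expectations: averaged over all admissible \<open>x\<close>, each vector of
  \<open>D\<^sup>\<perp> - D\<close> survives in the new \<open>D\<^sup>\<perp> - D\<close> with probability at most \<open>1/2\<close>.\<close>

lemma exists_extend_code_dual_mass_half:
  assumes D: "isotropic n D k" and "k < n" and f: "\<And>v. 0 \<le> f v"
  shows "\<exists>x\<in>trace_dual n D - D. 2 * dual_mass n f (extend_code D x) \<le> dual_mass n f D"
proof -
  define S where "S = trace_dual n D - D"
  define G where "G x = (\<Sum>v\<in>S. if trace_ip n x v = F0 then f v else 0)" for x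
  have "finite S" by (simp add: S_def)
  have "finite D" using D additive_code_finite by (auto simp: isotropic_def)
  moreover have "card D < card (trace_dual n D)"
    using D \<open>k < n\<close> by (simp add: isotropic_def)
  ultimately have "S \<noteq> {}"
    using card_mono[of D "trace_dual n D"] unfolding S_def by auto
  have "(\<Sum>x\<in>S. G x) = (\<Sum>v\<in>S. \<Sum>x\<in>S. if trace_ip n x v = F0 then f v else 0)"
    unfolding G_def by (rule sum.swap)
  also have "\<dots> = (\<Sum>v\<in>S. f v * card {x \<in> S. trace_ip n x v = F0})"
    by (rule sum.cong[OF refl]) (simp add: sum.inter_filter[symmetric] \<open>finite S\<close>)
  also have "\<dots> \<le> (\<Sum>v\<in>S. f v * (card S / 2))"
  proof (intro sum_mono mult_left_mono)
    fix v assume "v \<in> S"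
    then show "real (card {x \<in> S. trace_ip n x v = F0}) \<le> card S / 2"
      using card_orthogonal_in_dual_le_half[OF D] unfolding S_def by fastforce
  qed (rule f)
  also have "\<dots> = card S * (dual_mass n f D / 2)"
    unfolding dual_mass_def S_def[symmetric]
    by (simp add: sum_distrib_right[symmetric] sum_divide_distrib[symmetric])
  finally obtain x where "x \<in> S" "G x \<le> dual_mass n f D / 2"
    using exists_le_mean[OF \<open>finite S\<close> \<open>S \<noteq> {}\<close>] by blast
  moreover have "dual_mass n f (extend_code D x) \<le> G x"
    unfolding G_def S_def using dual_mass_extend_code_le[OF _ f] D by (simp add: isotropic_def)
  ultimately show ?thesis unfolding S_def by force
qed

lemma isotropic_chain:
  assumes f: "\<And>v. 0 \<le> f v" and "k \<le> n"
  shows "\<exists>D. (\<forall>j\<le>k. isotropic n (D j) j \<and> 2 ^ j * dual_mass n f (D j) \<le> dual_mass n f {zero_vec})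
           \<and> (\<forall>i j. i \<le> j \<longrightarrow> j \<le> k \<longrightarrow> D i \<subseteq> D j)"
  using \<open>k \<le> n\<close>
proof (induction k)
  case 0
  show ?case by (rule exI[of _ "\<lambda>_. {zero_vec}"]) (simp add: isotropic_zero_code)
next
  case (Suc k)
  then obtain D where
    D: "\<forall>j\<le>k. isotropic n (D j) j \<and> 2 ^ j * dual_mass n f (D j) \<le> dual_mass n f {zero_vec}"
    and mono: "\<forall>i j. i \<le> j \<longrightarrow> j \<le> k \<longrightarrow> D i \<subseteq> D j"
    by auto
  obtain x where x: "x \<in> trace_dual n (D k) - D k"
    and half: "2 * dual_mass n f (extend_code (D k) x) \<le> dual_mass n f (D k)"
    using exists_extend_code_dual_mass_half[of n "D k" k f] D Suc.prems f by auto
  define D' where "D' = D(Suc k := extend_code (D k) x)"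
  have "2 ^ Suc k * dual_mass n f (extend_code (D k) x) \<le> 2 ^ k * dual_mass n f (D k)"
    using half by simp
  also have "\<dots> \<le> dual_mass n f {zero_vec}" using D by simp
  finally have "\<forall>j\<le>Suc k. isotropic n (D' j) j \<and> 2 ^ j * dual_mass n f (D' j) \<le> dual_mass n f {zero_vec}"
    using D isotropic_extend_code[OF _ x] by (auto simp: D'_def le_Suc_eq)
  moreover have "\<forall>i j. i \<le> j \<longrightarrow> j \<le> Suc k \<longrightarrow> D' i \<subseteq> D' j"
    using mono subset_extend_code[of "D k" x] by (auto simp: D'_def le_Suc_eq)
  ultimately show ?case by blast
qed

section \<open>Avoiding vectors of low weight\<close>

definition low_weight :: "nat \<Rightarrow> real \<Rightarrow> (nat \<Rightarrow> f4) set" where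
  "low_weight n t = {v \<in> vecs n. real (weight n v) < t}"

lemma sum_vecs_indicator_low_weight:
  fixes c :: real
  shows "(\<Sum>v\<in>vecs n. if v \<in> low_weight n t then c else 0) = c * card (low_weight n t)"
proof -
  have "vecs n \<inter> low_weight n t = low_weight n t" by (auto simp: low_weight_def)
  then show ?thesis by (simp add: sum.If_cases)
qed

lemma dual_mass_less_imp_heavy:
  assumes f: "\<And>v. 0 \<le> f v"
    and light: "\<And>v. v \<in> low_weight n t \<Longrightarrow> c \<le> f v"
    and "dual_mass n f D < c"
  shows "\<forall>v\<in>trace_dual n D - D. t \<le> real (weight n v)"
proof (intro ballI leI notI)
  fix v assume v: "v \<in> trace_dual n D - D" and "real (weight n v) < t"
  then have "c \<le> f v"
    using trace_dual_subset_vecs by (intro light) (auto simp: low_weight_def)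
  also have "\<dots> \<le> dual_mass n f D"
    unfolding dual_mass_def using v by (intro member_le_sum) (auto simp: f)
  finally show False using \<open>dual_mass n f D < c\<close> by simp
qed

lemma nested_self_orthogonal_codes:
  assumes "finite I" and m_le: "\<forall>i\<in>I. m i \<le> n"
    and budget: "(\<Sum>i\<in>I. real (card (low_weight n (t i))) / 2 ^ m i) < 1"
  shows "\<exists>C. (\<forall>i\<in>I. additive_code n (C i) \<and> self_orthogonal n (C i) \<and> card (C i) = 2 ^ m i
      \<and> (\<forall>v\<in>trace_dual n (C i) - C i. real (weight n v) \<ge> t i))
      \<and> (\<forall>i\<in>I. \<forall>j\<in>I. m i \<le> m j \<longrightarrow> C i \<subseteq> C j)"
proof -
  define f where "f v = (\<Sum>i\<in>I. if v \<in> low_weight n (t i) then 1 / 2 ^ m i else (0::real))" for v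
  have f_nonneg: "0 \<le> f v" for v
    unfolding f_def by (intro sum_nonneg) auto
  obtain D where
    D: "\<forall>j\<le>n. isotropic n (D j) j \<and> 2 ^ j * dual_mass n f (D j) \<le> dual_mass n f {zero_vec}"
    and mono: "\<forall>i j. i \<le> j \<longrightarrow> j \<le> n \<longrightarrow> D i \<subseteq> D j"
    using isotropic_chain[where f = f and k = n and n = n] f_nonneg by blast
  have "dual_mass n f {zero_vec} \<le> (\<Sum>v\<in>vecs n. f v)"
    unfolding dual_mass_def trace_dual_zero_code by (rule sum_mono2) (auto simp: f_nonneg)
  also have "\<dots> = (\<Sum>i\<in>I. real (card (low_weight n (t i))) / 2 ^ m i)"
    unfolding f_def sum.swap[where A = "vecs n"] sum_vecs_indicator_low_weight by simp
  finally have mass_lt_1: "dual_mass n f {zero_vec} < 1" using budget by linarith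
  have heavy: "\<forall>v\<in>trace_dual n (D (m i)) - D (m i). t i \<le> real (weight n v)" if i: "i \<in> I" for i
  proof (rule dual_mass_less_imp_heavy[OF f_nonneg])
    show "1 / 2 ^ m i \<le> f v" if "v \<in> low_weight n (t i)" for v
    proof -
      have "1 / 2 ^ m i = (\<lambda>j. if v \<in> low_weight n (t j) then 1 / 2 ^ m j else 0) i"
        using that by simp
      also have "\<dots> \<le> f v"
        unfolding f_def by (rule member_le_sum) (use i \<open>finite I\<close> in auto)
      finally show ?thesis .
    qed
    have "2 ^ m i * dual_mass n f (D (m i)) < 1"
      using D m_le i mass_lt_1 by fastforce
    then show "dual_mass n f (D (m i)) < 1 / 2 ^ m i"
      by (simp add: field_simps)
  qed
  have "isotropic n (D (m i)) (m i)" if "i \<in> I" for i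
    using D m_le that by auto
  then show ?thesis
    using heavy mono m_le by (intro exI[of _ "\<lambda>i. D (m i)"]) (auto simp: isotropic_def)
qed

section \<open>The entropy function and the volume of Hamming balls\<close>

lemma H4_tendsto_0: "(H4 \<longlongrightarrow> 0) (at_right 0)"
  unfolding H4_def log_def by real_asymp

lemma H4_three_quarters: "H4 (3/4) = 1"
  unfolding H4_def log_def by (simp add: ln_div)

lemma H4_has_real_derivative:
  assumes "0 < x" "x < 1"
  shows "(H4 has_real_derivative (log 4 (1 - x) - log 4 (x / 3))) (at x)"
  unfolding H4_def using assms
  by (auto intro!: derivative_eq_intros simp: log_def add_divide_distrib diff_divide_distrib)

lemma continuous_on_H4: "0 < a \<Longrightarrow> b < 1 \<Longrightarrow> continuous_on {a..b} H4"
  unfolding H4_def log_def by (intro continuous_intros) auto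

lemma H4_strict_mono:
  assumes "0 < a" "a < b" "b \<le> 3/4"
  shows "H4 a < H4 b"
proof (rule DERIV_pos_imp_increasing_open[OF assms(2)])
  fix x assume x: "a < x" "x < b"
  then have "log 4 (x / 3) < log 4 (1 - x)" using assms by simp
  then show "\<exists>y. (H4 has_real_derivative y) (at x) \<and> 0 < y"
    using H4_has_real_derivative[of x] x assms by auto
qed (use assms in \<open>intro continuous_on_H4, auto\<close>)

lemma ex1_H4_eq:
  assumes "0 < y" "y < 1"
  shows "\<exists>!x. 0 < x \<and> x \<le> 3/4 \<and> H4 x = y"
proof -
  obtain b where b: "b > 0" "\<And>x. 0 < x \<Longrightarrow> x < b \<Longrightarrow> H4 x < y"
    using order_tendstoD(2)[OF H4_tendsto_0 assms(1)]
    unfolding eventually_at_right[OF zero_less_one] by auto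
  define a where "a = min (b / 2) (1 / 2)"
  have a: "0 < a" "a < 3/4" "H4 a < y" using b unfolding a_def by auto
  then obtain x where x: "a \<le> x" "x \<le> 3/4" "H4 x = y"
    using IVT'[of H4 a y "3/4"] H4_three_quarters assms continuous_on_H4[of a "3/4"] by auto
  show ?thesis
  proof (rule ex1I[of _ x])
    fix z assume "0 < z \<and> z \<le> 3/4 \<and> H4 z = y"
    then show "z = x"
      using H4_strict_mono[of z x] H4_strict_mono[of x z] x a by (cases z x rule: linorder_cases) auto
  qed (use x a in auto)
qed

lemma H4_inv:
  assumes "0 < y" "y < 1"
  shows "0 < H4_inv y" "H4_inv y \<le> 3/4" "H4 (H4_inv y) = y"
  using theI'[OF ex1_H4_eq[OF assms]] unfolding H4_inv_def by auto

text \<open>Weigh each vector \<open>v\<close> by \<open>p ^ wt v * q ^ (n - wt v)\<close> with \<open>p = l/3\<close>, \<open>q = 1 - l\<close>: the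
  weights sum to \<open>(3p + q) ^ n = 1\<close>, and each is at least \<open>4 powr (- n * H4 l)\<close> when
  \<open>wt v < l n\<close>.\<close>

lemma card_low_weight_le:
  assumes l: "0 < l" "l \<le> 3/4"
  shows "real (card (low_weight n (l * n))) \<le> 4 powr (n * H4 l)"
proof -
  define p where "p = l / 3"
  define q where "q = 1 - l"
  have pq: "0 < p" "p \<le> q" using l unfolding p_def q_def by auto
  define K where "K = exp (l * n * ln p + (1 - l) * n * ln q)"
  have K: "K = 4 powr (- (n * H4 l))"
    unfolding K_def H4_def p_def q_def powr_def log_def by (simp add: algebra_simps) (simp add: divide_simps)
  have K_le: "K \<le> p ^ weight n v * q ^ (n - weight n v)" if v: "v \<in> low_weight n (l * n)" for v
  proof -
    define w where "w = weight n v"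
    have "w \<le> n" unfolding w_def by (rule weight_le)
    have "real w \<le> l * n" using v unfolding low_weight_def w_def by auto
    then have "0 \<le> (l * n - w) * (ln q - ln p)" using pq by (intro mult_nonneg_nonneg) auto
    then have "l * n * ln p + (1 - l) * n * ln q \<le> w * ln p + (real n - w) * ln q"
      by (simp add: algebra_simps)
    moreover have "p ^ w * q ^ (n - w) = exp (w * ln p + real (n - w) * ln q)"
      using pq by (simp add: exp_add exp_of_nat_mult)
    ultimately show ?thesis unfolding K_def w_def[symmetric] using \<open>w \<le> n\<close> by simp
  qed
  have "real (card (low_weight n (l * n))) * K \<le> (\<Sum>v\<in>low_weight n (l * n). p ^ weight n v * q ^ (n - weight n v))"
    using sum_mono[OF K_le] by simp
  also have "\<dots> \<le> (\<Sum>v\<in>vecs n. p ^ weight n v * q ^ (n - weight n v))"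
    by (rule sum_mono2) (use pq in \<open>auto simp: low_weight_def\<close>)
  also have "\<dots> = 1" unfolding sum_vecs_weight_power p_def q_def by simp
  finally show ?thesis unfolding K by (simp add: powr_minus field_simps)
qed

lemma eventually_card_low_weight_less:
  fixes c :: real
  assumes "0 \<le> c" "0 < \<rho>" "\<rho> < 1" "0 < \<epsilon>"
  shows "\<forall>\<^sub>F n in sequentially.
    c * card (low_weight n ((H4_inv ((1 - \<rho>) / 2) - \<epsilon>) * n)) < 2 powr ((1 - \<rho>) * n)"
proof -
  define y where "y = (1 - \<rho>) / 2"
  have y: "0 < y" "y < 1" using assms(2,3) by (auto simp: y_def)
  have "\<forall>\<^sub>F n in sequentially. c * card (low_weight n ((H4_inv y - \<epsilon>) * n)) < 2 powr ((1 - \<rho>) * n)"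
  proof (cases "H4_inv y - \<epsilon> \<le> 0")
    case True
    then have nonpos: "(H4_inv y - \<epsilon>) * n \<le> 0" for n :: nat
      by (simp add: mult_nonpos_nonneg)
    then have "low_weight n ((H4_inv y - \<epsilon>) * n) = {}" for n
      by (auto simp: low_weight_def not_less intro: order_trans[OF nonpos[of n]])
    then show ?thesis by simp
  next
    case False
    define l where "l = H4_inv y - \<epsilon>"
    have "0 < l" "l \<le> 3/4" "H4 l < y"
      using False H4_inv[OF y] H4_strict_mono[of l "H4_inv y"] assms(4) by (auto simp: l_def)
    then have "filterlim (\<lambda>n::nat. 2 powr (2 * (y - H4 l) * n)) at_top at_top"
      by real_asymp
    then have "\<forall>\<^sub>F n in sequentially. c < 2 powr (2 * (y - H4 l) * n)"
      by (simp add: filterlim_at_top_dense)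
    then show ?thesis
    proof (rule eventually_mono)
      fix n :: nat assume c_less: "c < 2 powr (2 * (y - H4 l) * n)"
      have "c * card (low_weight n (l * n)) \<le> c * 2 powr (2 * n * H4 l)"
        using card_low_weight_le[OF \<open>0 < l\<close> \<open>l \<le> 3/4\<close>, of n] \<open>0 \<le> c\<close>
        by (intro mult_left_mono) (simp_all add: powr_powr[symmetric])
      also have "\<dots> < 2 powr (2 * (y - H4 l) * n) * 2 powr (2 * n * H4 l)"
        using c_less by simp
      also have "\<dots> = 2 powr ((1 - \<rho>) * n)"
      proof -
        have "2 * (y - H4 l) * n + 2 * n * H4 l = (1 - \<rho>) * n" by (simp add: y_def field_simps)
        then show ?thesis by (simp add: powr_add[symmetric])
      qed
      finally show "c * card (low_weight n ((H4_inv y - \<epsilon>) * n)) < 2 powr ((1 - \<rho>) * n)"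
        unfolding l_def .
    qed
  qed
  then show ?thesis unfolding y_def .
qed

lemma Ints_nonneg_imp_of_nat:
  fixes x :: real
  assumes "x \<in> \<int>" "0 \<le> x"
  shows "\<exists>m::nat. real m = x"
  using assms by (metis Ints_cases of_int_0_le_iff of_int_of_nat_eq nonneg_int_cases)

lemma nested_codes_of_rates:
  fixes r t :: "'i \<Rightarrow> real"
  assumes "finite I" "I \<noteq> {}"
    and r: "\<forall>i\<in>I. 0 \<le> r i \<and> r i \<le> 1"
    and int: "\<forall>i\<in>I. r i * n \<in> \<int>"
    and small: "\<forall>i\<in>I. real (card I) * card (low_weight n (t i)) < 2 powr ((1 - r i) * n)"
  shows "\<exists>C. (\<forall>i\<in>I. additive_code n (C i) \<and> self_orthogonal n (C i)
      \<and> real (card (C i)) = 2 powr (n - r i * n)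
      \<and> (\<forall>v\<in>trace_dual n (C i) - C i. real (weight n v) \<ge> t i))
      \<and> (\<forall>i\<in>I. \<forall>j\<in>I. r i \<le> r j \<longrightarrow> C j \<subseteq> C i)"
proof -
  have "\<exists>m::nat. real m = n - r i * n" if "i \<in> I" for i
    using int r that by (intro Ints_nonneg_imp_of_nat) (auto simp: mult_left_le_one_le)
  then obtain m where m: "\<forall>i\<in>I. real (m i) = n - r i * n" by metis
  have m_le: "\<forall>i\<in>I. m i \<le> n"
    using m r by (simp flip: of_nat_le_iff[where 'a = real])
  have pow: "2 ^ m i = 2 powr ((1 - r i) * n)" if "i \<in> I" for i
    using m that by (simp add: powr_realpow[symmetric] left_diff_distrib)
  have "0 < card I" using \<open>finite I\<close> \<open>I \<noteq> {}\<close> by (simp add: card_gt_0_iff)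
  have "real (card (low_weight n (t i))) / 2 ^ m i < 1 / card I" if "i \<in> I" for i
    using small that pow[OF that] \<open>0 < card I\<close> by (simp add: field_simps)
  then have "(\<Sum>i\<in>I. real (card (low_weight n (t i))) / 2 ^ m i) < (\<Sum>i\<in>I. 1 / card I)"
    using \<open>finite I\<close> \<open>I \<noteq> {}\<close> by (intro sum_strict_mono) auto
  also have "\<dots> = 1" using \<open>finite I\<close> \<open>I \<noteq> {}\<close> by simp
  finally obtain C where C: "\<forall>i\<in>I. additive_code n (C i) \<and> self_orthogonal n (C i)
      \<and> card (C i) = 2 ^ m i \<and> (\<forall>v\<in>trace_dual n (C i) - C i. real (weight n v) \<ge> t i)"
    and nested: "\<forall>i\<in>I. \<forall>j\<in>I. m i \<le> m j \<longrightarrow> C i \<subseteq> C j"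
    using nested_self_orthogonal_codes[OF \<open>finite I\<close> m_le] by blast
  have "m j \<le> m i" if "i \<in> I" "j \<in> I" "r i \<le> r j" for i j
  proof -
    have "real (m j) \<le> real (m i)" using m that by (simp add: mult_right_mono)
    then show ?thesis by simp
  qed
  moreover have "real (card (C i)) = 2 powr (n - r i * n)" if "i \<in> I" for i
    using C pow[OF that] that by (simp add: algebra_simps)
  ultimately show ?thesis using C nested by (intro exI[of _ C]) auto
qed

theorem lemma1:
  fixes s :: nat and r :: "nat \<Rightarrow> real" and \<epsilon> :: real
  assumes "s \<ge> 1"
    and "0 < r 1" and "r s < 1"
    and "\<And>i j. 1 \<le> i \<Longrightarrow> i < j \<Longrightarrow> j \<le> s \<Longrightarrow> r i < r j"
    and "\<epsilon> > 0"
  shows "\<exists>n0::nat. \<forall>n\<ge>n0. (\<forall>i\<in>{1..s}. r i * real n \<in> \<int>) \<longrightarrow>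
    (\<exists>C :: nat \<Rightarrow> (nat \<Rightarrow> f4) set.
       (\<forall>i\<in>{1..s}. additive_code n (C i) \<and> self_orthogonal n (C i)
          \<and> real (card (C i)) = 2 powr (real n - r i * real n)
          \<and> (\<forall>v\<in>trace_dual n (C i) - C i.
               real (weight n v) \<ge> (H4_inv ((1 - r i) / 2) - \<epsilon>) * real n))
     \<and> (\<forall>i j. 1 \<le> i \<longrightarrow> i \<le> j \<longrightarrow> j \<le> s \<longrightarrow> C j \<subseteq> C i))"
proof -
  have r_mono: "r i \<le> r j" if "1 \<le> i" "i \<le> j" "j \<le> s" for i j
    using assms(4)[of i j] that by (cases "i = j") auto
  have r_bounds: "\<forall>i\<in>{1..s}. 0 < r i \<and> r i < 1"
    using r_mono[of 1] r_mono[of _ s] assms(2,3) by fastforce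
  have "\<forall>\<^sub>F n in sequentially. \<forall>i\<in>{1..s}. real (card {1..s})
      * card (low_weight n ((H4_inv ((1 - r i) / 2) - \<epsilon>) * n)) < 2 powr ((1 - r i) * n)"
    using eventually_card_low_weight_less[of "real s" _ \<epsilon>] r_bounds assms(5)
    by (intro eventually_ball_finite) auto
  then obtain n0 where n0: "\<And>n. n \<ge> n0 \<Longrightarrow> \<forall>i\<in>{1..s}. real (card {1..s})
      * card (low_weight n ((H4_inv ((1 - r i) / 2) - \<epsilon>) * n)) < 2 powr ((1 - r i) * n)"
    unfolding eventually_sequentially by blast
  show ?thesis
  proof (intro exI[of _ n0] allI impI, goal_cases)
    case (1 n)
    have "{1..s} \<noteq> {}" "\<forall>i\<in>{1..s}. 0 \<le> r i \<and> r i \<le> 1"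
      using assms(1) r_bounds by auto
    from nested_codes_of_rates[where n = n and t = "\<lambda>i. (H4_inv ((1 - r i) / 2) - \<epsilon>) * n",
        OF finite_atLeastAtMost this 1(2) n0[OF 1(1)]]
    show ?case
      by (rule ex_forward) (use r_mono in \<open>auto; meson atLeastAtMost_iff order_trans subsetD\<close>)
  qed
qed

end
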